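(* Let $m$ be a positive integer satisfying $\sigma(m)\equiv 0\pmod m$, $\sigma_2(m)\equiv 2\pmod m$ and $m\equiv 0\pmod 4$. Then all odd prime factors of $m$ except exactly one occur in $m$ with even multiplicity. The remaining odd prime factor $q$ occurs with multiplicity congruent to $1 \bmod 4$, and $q\equiv 3\pmod 4$.
   Context: For integers $k\ge 0$ and $n\ge 1$, $\sigma_k(n)=\sum_{d\mid n} d^k$, and $\sigma=\sigma_1$. *)

theory Defs
  imports "HOL-Number_Theory.Number_Theory"
begin

definition sigma_k :: "nat \<Rightarrow> nat \<Rightarrow> nat" where
  "sigma_k k n = (\<Sum>d\<in>{d. d dvd n}. d ^ k)"

abbreviation sigma :: "nat \<Rightarrow> nat" where
  "sigma n \<equiv> sigma_k 1 n"

end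

theory Submission
  imports Defs
begin

text \<open>Both \<open>\<sigma>\<close> and \<open>\<sigma>\<^sub>2\<close> are multiplicative, and on a prime power \<open>p\<^sup>e\<close> they are
  geometric sums, hence \<open>\<equiv> e + 1\<close> modulo any \<open>r\<close> with \<open>p\<^sup>k \<equiv> 1 (mod r)\<close>.
  Since \<open>\<sigma>\<^sub>2(m) \<equiv> 2 (mod 4)\<close>, exactly one factor \<open>\<sigma>\<^sub>2(p\<^sup>e)\<close> is even, and it is
  \<open>\<equiv> 2 (mod 4)\<close>. The factor of the prime \<open>2\<close> is odd, and for odd \<open>p\<close> we have
  \<open>\<sigma>\<^sub>2(p\<^sup>e) \<equiv> e + 1 (mod 4)\<close>; so exactly one odd prime \<open>q\<close> has odd multiplicity,
  and that multiplicity is \<open>\<equiv> 1 (mod 4)\<close>. Then \<open>\<sigma>(q\<^sup>e)\<close> is the only even factor of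
  \<open>\<sigma>(m)\<close>, so \<open>4 \<bar> \<sigma>(q\<^sup>e)\<close>; were \<open>q \<equiv> 1 (mod 4)\<close>, this factor would be
  \<open>\<equiv> e + 1 \<equiv> 2 (mod 4)\<close>.\<close>

lemma sigma_k_mult:
  fixes a b :: nat
  assumes "a > 0" "b > 0" "coprime a b"
  shows "sigma_k k (a * b) = sigma_k k a * sigma_k k b"
proof -
  let ?f = "\<lambda>(x, y). x * (y::nat)"
  have divisors_mult: "{d. d dvd a * b} = ?f ` ({x. x dvd a} \<times> {y. y dvd b})"
  proof
    show "{d. d dvd a * b} \<subseteq> ?f ` ({x. x dvd a} \<times> {y. y dvd b})"
    proof
      fix d assume "d \<in> {d. d dvd a * b}"
      then obtain x y where "d = x * y" "x dvd a" "y dvd b" by (auto elim: dvd_productE)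
      then show "d \<in> ?f ` ({x. x dvd a} \<times> {y. y dvd b})" by force
    qed
  qed (auto intro: mult_dvd_mono)
  have inj: "inj_on ?f ({x. x dvd a} \<times> {y. y dvd b})"
  proof (rule inj_onI, clarsimp)
    fix x1 y1 x2 y2 :: nat
    assume h: "x1 dvd a" "y1 dvd b" "x2 dvd a" "y2 dvd b" "x1 * y1 = x2 * y2"
    have "coprime x1 y2" "coprime x2 y1" using h assms(3) by (meson coprime_divisors)+
    moreover have "x1 dvd x2 * y2" "x2 dvd x1 * y1" using h(5) by (metis dvd_triv_left)+
    ultimately have "x1 = x2" by (simp add: coprime_dvd_mult_left_iff dvd_antisym)
    moreover have "x1 > 0" using h(1) assms(1) by (metis dvd_0_left_iff gr0I)
    ultimately show "x1 = x2 \<and> y1 = y2" using h(5) by simp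
  qed
  have "sigma_k k (a * b) = (\<Sum>p\<in>{x. x dvd a} \<times> {y. y dvd b}. (?f p) ^ k)"
    unfolding sigma_k_def divisors_mult by (simp add: sum.reindex[OF inj])
  also have "\<dots> = (\<Sum>x\<in>{x. x dvd a}. \<Sum>y\<in>{y. y dvd b}. x ^ k * y ^ k)"
    by (simp add: sum.cartesian_product power_mult_distrib split_def)
  also have "\<dots> = sigma_k k a * sigma_k k b"
    unfolding sigma_k_def by (simp add: sum_product)
  finally show ?thesis .
qed

lemma sigma_k_prod_prime_powers:
  assumes "finite P" "\<And>p. p \<in> P \<Longrightarrow> prime (p::nat)"
  shows "sigma_k k (\<Prod>p\<in>P. p ^ e p) = (\<Prod>p\<in>P. sigma_k k (p ^ e p))"
  using assms
proof (induction P rule: finite_induct)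
  case empty
  then show ?case by (simp add: sigma_k_def)
next
  case (insert x F)
  have "coprime (x ^ e x) (\<Prod>p\<in>F. p ^ e p)"
    using insert by (intro prod_coprime_right)
      (metis coprime_power_left_iff coprime_power_right_iff insertCI primes_coprime)
  moreover have "x ^ e x > 0" "(\<Prod>p\<in>F. p ^ e p) > 0"
    using insert prime_gt_0_nat by (simp_all add: prod_pos)
  ultimately show ?case using insert sigma_k_mult by simp
qed

lemma sigma_k_eq_prod_prime_factors:
  fixes n :: nat
  assumes "n > 0"
  shows "sigma_k k n = (\<Prod>p\<in>prime_factors n. sigma_k k (p ^ multiplicity p n))"
proof -
  have "n = (\<Prod>p\<in>prime_factors n. p ^ multiplicity p n)"
    using prod_prime_factors[of n] assms by simp
  also have "sigma_k k \<dots> = (\<Prod>p\<in>prime_factors n. sigma_k k (p ^ multiplicity p n))"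
    by (rule sigma_k_prod_prime_powers) auto
  finally show ?thesis .
qed

lemma sigma_k_prime_power:
  fixes p :: nat
  assumes "prime p"
  shows "sigma_k k (p ^ e) = (\<Sum>i\<le>e. (p ^ k) ^ i)"
proof -
  have divisors: "{d. d dvd p ^ e} = (\<lambda>i. p ^ i) ` {..e}"
    using divides_primepow_nat[OF assms] by auto
  have inj: "inj_on (\<lambda>i. p ^ i) {..e}"
    using assms prime_gt_1_nat by (auto intro!: inj_onI simp: power_inject_exp)
  show ?thesis unfolding sigma_k_def divisors
    by (simp add: sum.reindex[OF inj] power_mult[symmetric] mult.commute)
qed

lemma sigma_k_prime_power_cong:
  fixes p :: nat
  assumes "prime p" "[p ^ k = 1] (mod r)"
  shows "[sigma_k k (p ^ e) = e + 1] (mod r)"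
proof -
  have "[(\<Sum>i\<le>e. (p ^ k) ^ i) = (\<Sum>i\<le>e. 1 ^ i)] (mod r)"
    by (intro cong_sum cong_pow assms(2))
  then show ?thesis by (simp add: sigma_k_prime_power[OF assms(1)])
qed

lemma odd_sigma_k_prime_power:
  fixes p :: nat
  assumes "prime p" "k > 0" "even p \<or> even e"
  shows "odd (sigma_k k (p ^ e))"
proof (cases "even p")
  case True
  have "odd (\<Sum>i\<le>e. (p ^ k) ^ i)"
    using True \<open>k > 0\<close> by (induction e) auto
  then show ?thesis by (simp add: sigma_k_prime_power[OF assms(1)])
next
  case False
  then have "odd (p ^ k)" by simp
  then have "p ^ k mod 2 = 1" by (metis odd_iff_mod_2_eq_one)
  then have "[p ^ k = 1] (mod 2)" by (simp add: cong_def)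
  from sigma_k_prime_power_cong[OF assms(1) this, of e]
  have "sigma_k k (p ^ e) mod 2 = (e + 1) mod 2" by (simp add: cong_def)
  then show ?thesis using False assms(3) by presburger
qed

lemma odd_square_cong_1_mod_4:
  fixes p :: nat
  assumes "odd p"
  shows "[p ^ 2 = 1] (mod 4)"
proof -
  obtain k where "p = 2 * k + 1" using assms oddE by blast
  then have "p ^ 2 = 4 * (k * k + k) + 1" by (simp add: power2_eq_square algebra_simps)
  then show ?thesis by (simp add: cong_def)
qed

lemma prod_mod_4_eq_2E:
  fixes g :: "'a \<Rightarrow> nat"
  assumes "finite P" "(\<Prod>p\<in>P. g p) mod 4 = 2"
  obtains q where "q \<in> P" "g q mod 4 = 2" "\<And>p. p \<in> P - {q} \<Longrightarrow> odd (g p)"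
proof -
  have "even (\<Prod>p\<in>P. g p)" by (metis assms(2) dvd_mod_iff even_numeral)
  then obtain q where q: "q \<in> P" "even (g q)" using even_prod_iff[OF assms(1)] by blast
  have split: "(\<Prod>p\<in>P. g p) = g q * (\<Prod>p\<in>P - {q}. g p)" using prod.remove[OF assms(1) q(1)] .
  have not_4_dvd: "\<not> 4 dvd (\<Prod>p\<in>P. g p)" using assms(2) by presburger
  have "odd (\<Prod>p\<in>P - {q}. g p)"
  proof
    assume "even (\<Prod>p\<in>P - {q}. g p)"
    then have "2 * 2 dvd g q * (\<Prod>p\<in>P - {q}. g p)" by (rule mult_dvd_mono[OF q(2)])
    with not_4_dvd split show False by simp
  qed
  then have "\<And>p. p \<in> P - {q} \<Longrightarrow> odd (g p)" using assms(1) by (simp add: even_prod_iff)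
  moreover have "\<not> 4 dvd g q" using not_4_dvd split by (metis dvd_mult2)
  then have "g q mod 4 = 2" using q(2) by presburger
  ultimately show thesis using that q(1) by blast
qed

lemma sigma_2_mod_4_eq_2E:
  fixes m :: nat
  assumes "m > 0" "sigma_k 2 m mod 4 = 2"
  obtains q where "q \<in> prime_factors m" "odd q" "multiplicity q m mod 4 = 1"
    "\<And>p. p \<in> prime_factors m - {q} \<Longrightarrow> odd p \<Longrightarrow> even (multiplicity p m)"
proof -
  let ?g = "\<lambda>p. sigma_k 2 (p ^ multiplicity p m)"
  have prod_mod_4: "(\<Prod>p\<in>prime_factors m. ?g p) mod 4 = 2"
    using assms sigma_k_eq_prod_prime_factors[of m 2] by simp
  obtain q where q: "q \<in> prime_factors m" "?g q mod 4 = 2"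
    and others: "\<And>p. p \<in> prime_factors m - {q} \<Longrightarrow> odd (?g p)"
    using prod_mod_4_eq_2E[OF finite_set_mset prod_mod_4] by blast
  have "prime q" using q(1) by auto
  have "odd q"
  proof
    assume "even q"
    then have "odd (?g q)" using odd_sigma_k_prime_power[OF \<open>prime q\<close>, of 2] by simp
    with q(2) show False by presburger
  qed
  have "[?g q = multiplicity q m + 1] (mod 4)"
    using sigma_k_prime_power_cong \<open>prime q\<close> odd_square_cong_1_mod_4[OF \<open>odd q\<close>] by blast
  then have "multiplicity q m mod 4 = 1" using q(2) unfolding cong_def by presburger
  moreover have "even (multiplicity p m)" if p: "p \<in> prime_factors m - {q}" "odd p" for p
  proof -
    have "prime p" using p by auto
    have "[p ^ 2 = 1] (mod 2)"
      using cong_dvd_modulus_nat[OF odd_square_cong_1_mod_4[OF p(2)], of 2] by simp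
    then have "[?g p = multiplicity p m + 1] (mod 2)"
      by (rule sigma_k_prime_power_cong[OF \<open>prime p\<close>])
    then show ?thesis using others[OF p(1)] unfolding cong_def by presburger
  qed
  ultimately show thesis using that q(1) \<open>odd q\<close> by blast
qed

lemma four_dvd_sigma_imp_mod_4_eq_3:
  fixes m q :: nat
  assumes "m > 0" "4 dvd sigma m" "q \<in> prime_factors m" "odd q" "multiplicity q m mod 4 = 1"
    and "\<And>p. p \<in> prime_factors m - {q} \<Longrightarrow> odd p \<Longrightarrow> even (multiplicity p m)"
  shows "q mod 4 = 3"
proof -
  let ?s = "\<lambda>p. sigma (p ^ multiplicity p m)"
  have "prime q" using assms(3) by auto
  have "odd (?s p)" if "p \<in> prime_factors m - {q}" for p
    using that assms(6) odd_sigma_k_prime_power[of p 1] by auto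
  then have "odd (\<Prod>p\<in>prime_factors m - {q}. ?s p)" by (simp add: even_prod_iff)
  then have "coprime (2 ^ 2) (\<Prod>p\<in>prime_factors m - {q}. ?s p)"
    by (simp only: coprime_power_left_iff) simp
  then have "coprime 4 (\<Prod>p\<in>prime_factors m - {q}. ?s p)" by simp
  moreover have "sigma m = ?s q * (\<Prod>p\<in>prime_factors m - {q}. ?s p)"
    using sigma_k_eq_prod_prime_factors[OF assms(1)] prod.remove[OF _ assms(3)] by simp
  ultimately have "4 dvd ?s q" using assms(2) by (simp add: coprime_dvd_mult_left_iff)
  show ?thesis
  proof (rule ccontr)
    assume "q mod 4 \<noteq> 3"
    then have "[q ^ 1 = 1] (mod 4)" using \<open>odd q\<close> by (simp add: cong_def) presburger
    from sigma_k_prime_power_cong[OF \<open>prime q\<close> this, of "multiplicity q m"]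
    have "?s q mod 4 = 2" using assms(5) unfolding cong_def by presburger
    with \<open>4 dvd ?s q\<close> show False by simp
  qed
qed

theorem mainTheorem6:
  fixes m :: nat
  assumes "m > 0"
    and "[sigma m = 0] (mod m)"
    and "[sigma_k 2 m = 2] (mod m)"
    and "[m = 0] (mod 4)"
  shows "(\<exists>!q. q \<in> prime_factors m \<and> odd q \<and> odd (multiplicity q m)) \<and>
         (\<forall>q. q \<in> prime_factors m \<and> odd q \<and> odd (multiplicity q m) \<longrightarrow>
           [multiplicity q m = 1] (mod 4) \<and> [q = 3] (mod 4))"
proof -
  have "4 dvd m" using assms(4) by (simp add: cong_0_iff)
  have "sigma_k 2 m mod 4 = 2"
    using cong_dvd_modulus_nat[OF assms(3) \<open>4 dvd m\<close>] by (simp add: cong_def)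
  have "4 dvd sigma m"
    using assms(2) \<open>4 dvd m\<close> by (auto simp: cong_0_iff intro: dvd_trans)
  obtain q where q: "q \<in> prime_factors m" "odd q" "multiplicity q m mod 4 = 1"
    and even_others: "\<And>p. p \<in> prime_factors m - {q} \<Longrightarrow> odd p \<Longrightarrow> even (multiplicity p m)"
    using sigma_2_mod_4_eq_2E[OF assms(1) \<open>sigma_k 2 m mod 4 = 2\<close>] by blast
  have "q mod 4 = 3"
    using four_dvd_sigma_imp_mod_4_eq_3[OF assms(1) \<open>4 dvd sigma m\<close> q even_others] .
  have "odd (multiplicity q m)" using q(3) by presburger
  then have "p \<in> prime_factors m \<and> odd p \<and> odd (multiplicity p m) \<longleftrightarrow> p = q" for p
    using q(1,2) even_others by blast
  then show ?thesis using q(3) \<open>q mod 4 = 3\<close> by (auto simp: cong_def)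
qed

end
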